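(* Let $T$ be a triangle from a shape-regular family ($h_T\le\varrho r_T$), $\Gamma_{h,T}$ an open line segment with endpoints on $\partial T$ dividing $T$ into nonempty open parts $T_h^\pm$, and $\mu^\pm>0$. There is a constant $C>0$ independent of $h_T$ and of the location of $\Gamma_{h,T}$ such that $$h_T\|[\![q_h^\pm]\!]\|^2_{L^2(\Gamma_{h,T})}\le C|\mathbf{v}_h|^2_{H^1(T)}\qquad\forall(\mathbf{v}_h,q_h)\in\mathbf{V}M_h^{IFE}(T),$$ where $[\![q_h^\pm]\!]=q_h^+-q_h^-$.
   Context: $\mathbf{n}_h$ is the unit normal of $\Gamma_{h,T}$ pointing into $T_h^+$; $\sigma(\mu,\mathbf{v},q)=2\mu\boldsymbol{\epsilon}(\mathbf{v})-q\mathbb{I}$, $\boldsymbol{\epsilon}(\mathbf{v})=\frac12(\nabla\mathbf{v}+(\nabla\mathbf{v})^T)$. $\mathbf{V}M_h^{IFE}(T)$ is the set of pairs $(\mathbf{v},q)$ equal to $(\mathbf{v}^\pm,q^\pm)$ on $T_h^\pm$, where $\mathbf{v}^\pm\in P_1(T)^2$, $q^\pm\in P_0(T)$ satisfy $\sigma(\mu^+,\mathbf{v}^+,q^+)\mathbf{n}_h=\sigma(\mu^-,\mathbf{v}^-,q^-)\mathbf{n}_h$, $\mathbf{v}^+=\mathbf{v}^-$ on $\Gamma_{h,T}$, $\nabla\cdot\mathbf{v}^+=\nabla\cdot\mathbf{v}^-$; $q_h^\pm$ denote the constant pieces of $q_h$. *)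

theory Defs
  imports "HOL-Analysis.Analysis"
begin

type_synonym pt = "real ^ 2"
type_synonym mat2 = "real ^ 2 ^ 2"

definition tri :: "pt \<Rightarrow> pt \<Rightarrow> pt \<Rightarrow> pt set" where
  "tri a b c = interior (convex hull {a, b, c})"

definition inradius :: "pt set \<Rightarrow> real" where
  "inradius T = Sup {r. \<exists>x. ball x r \<subseteq> T}"

text \<open>Symmetric gradient and Cauchy stress of an affine field with constant gradient A
  (A $ i $ j = d v_i / d x_j) and constant pressure q.\<close>
definition epsm :: "mat2 \<Rightarrow> mat2" where
  "epsm A = (1/2) *\<^sub>R (A + transpose A)"

definition sigma :: "real \<Rightarrow> mat2 \<Rightarrow> real \<Rightarrow> mat2" where
  "sigma mu A q = (2 * mu) *\<^sub>R epsm A - q *\<^sub>R mat 1"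

definition divm :: "mat2 \<Rightarrow> real" where
  "divm A = (\<Sum>i\<in>UNIV. A $ i $ i)"

definition frob2 :: "mat2 \<Rightarrow> real" where
  "frob2 A = (\<Sum>i\<in>UNIV. \<Sum>j\<in>UNIV. (A $ i $ j)^2)"

definition Tplus :: "pt set \<Rightarrow> pt \<Rightarrow> pt \<Rightarrow> pt set" where
  "Tplus T p n = {x \<in> T. n \<bullet> (x - p) > 0}"

definition Tminus :: "pt set \<Rightarrow> pt \<Rightarrow> pt \<Rightarrow> pt set" where
  "Tminus T p n = {x \<in> T. n \<bullet> (x - p) < 0}"

text \<open>IFE space: v = (A+ x + b+, q+) on T+, (A- x + b-, q-) on T-, with the jump conditions.\<close>
definition IFE :: "real \<Rightarrow> real \<Rightarrow> pt \<Rightarrow> pt \<Rightarrow> pt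
    \<Rightarrow> mat2 \<Rightarrow> pt \<Rightarrow> real \<Rightarrow> mat2 \<Rightarrow> pt \<Rightarrow> real \<Rightarrow> bool" where
  "IFE mup mum p q n Ap bp qp Am bm qm \<longleftrightarrow>
     sigma mup Ap qp *v n = sigma mum Am qm *v n \<and>
     (\<forall>x \<in> open_segment p q. Ap *v x + bp = Am *v x + bm) \<and>
     divm Ap = divm Am"

definition H1semi2 :: "pt set \<Rightarrow> pt \<Rightarrow> pt \<Rightarrow> mat2 \<Rightarrow> mat2 \<Rightarrow> real" where
  "H1semi2 T p n Ap Am =
     integral T (\<lambda>x. if n \<bullet> (x - p) > 0 then frob2 Ap else frob2 Am)"

definition jumpL2sq :: "pt \<Rightarrow> pt \<Rightarrow> real \<Rightarrow> real \<Rightarrow> real" where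
  "jumpL2sq p q qp qm = (qp - qm)^2 * dist p q"

end

theory Submission
  imports Defs
begin

text \<open>Continuity of the two affine pieces along the interface forces \<open>(A\<^sup>+ - A\<^sup>-) t = 0\<close>
  for the tangent \<open>t\<close>; together with equal divergences this gives
  \<open>n \<bullet> A\<^sup>+ n = n \<bullet> A\<^sup>- n\<close>, and the normal component of the traction condition then
  yields \<open>q\<^sup>+ - q\<^sup>- = 2 (\<mu>\<^sup>+ - \<mu>\<^sup>-) n \<bullet> A\<^sup>- n\<close>. So the squared pressure jump is at most
  \<open>4 (\<mu>\<^sup>+ - \<mu>\<^sup>-)\<^sup>2 min |A\<^sup>\<plusminus>|\<^sup>2\<close>, while the \<open>H\<^sup>1\<close> seminorm is at least \<open>min |A\<^sup>\<plusminus>|\<^sup>2 |T|\<close>.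
  The length of the interface is at most \<open>h\<^sub>T\<close>, and shape regularity gives
  \<open>h\<^sub>T\<^sup>2 \<le> \<rho>\<^sup>2 |T| / |B\<^sub>1|\<close>, so \<open>C = 4 (\<mu>\<^sup>+ - \<mu>\<^sup>-)\<^sup>2 \<rho>\<^sup>2 / |B\<^sub>1| + 1\<close> works.\<close>

lemma inner_2: "x \<bullet> (y :: pt) = x$1 * y$1 + x$2 * y$2"
  by (simp add: inner_vec_def sum_2)

lemma matrix_vector_mult_2:
  fixes A :: mat2
  shows "(A *v x)$1 = A$1$1 * x$1 + A$1$2 * x$2" and "(A *v x)$2 = A$2$1 * x$1 + A$2$2 * x$2"
  by (simp_all add: matrix_vector_mult_def sum_2)

lemma normal_component_eq_divm:
  fixes D :: mat2
  assumes "norm n = 1" and "n \<bullet> u = 0" and "u \<noteq> 0" and "D *v u = 0"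
  shows "n \<bullet> (D *v n) = divm D"
proof -
  \<comment> \<open>\<open>u\<close> is a nonzero multiple of the unit tangent \<open>t\<close>, so \<open>D t = 0\<close> and the trace
    \<open>t \<bullet> D t + n \<bullet> D n\<close> reduces to its normal part.\<close>
  have unit: "(n$1)^2 + (n$2)^2 = 1"
    using assms(1) by (simp add: norm_eq_1 inner_2 power2_eq_square)
  have orth: "n$1 * u$1 + n$2 * u$2 = 0"
    using assms(2) by (simp add: inner_2)
  have kernel: "D$1$1 * u$1 + D$1$2 * u$2 = 0" "D$2$1 * u$1 + D$2$2 * u$2 = 0"
    using assms(4) by (metis matrix_vector_mult_2 zero_index)+
  define k where "k = n$1 * u$2 - n$2 * u$1"
  have u_tangent: "u$1 = - k * n$2" "u$2 = k * n$1"
    unfolding k_def using unit orth by algebra+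
  have "k \<noteq> 0"
    using assms(3) u_tangent by (metis exhaust_2 mult_eq_0_iff neg_0_equal_iff_equal vec_eq_iff zero_index)
  moreover have "k * (n \<bullet> (D *v n) - divm D) = 0"
    using unit kernel unfolding u_tangent
    by (simp add: inner_2 matrix_vector_mult_2 divm_def sum_2) algebra
  ultimately show ?thesis by simp
qed

lemma matrix_diff_annihilates_segment_direction:
  fixes A B :: "real^'n^'m"
  assumes "p \<noteq> q" and "\<forall>x\<in>open_segment p q. A *v x + b = B *v x + c"
  shows "(A - B) *v (q - p) = 0"
proof -
  define x where "x t = p + t *\<^sub>R (q - p)" for t :: real
  have on_segment: "x t \<in> open_segment p q" if "0 < t" "t < 1" for t
    using assms(1) that unfolding x_def in_segment
    by (intro conjI exI[of _ t]) (auto simp: algebra_simps)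
  have "A *v x (2/3) - A *v x (1/3) = B *v x (2/3) - B *v x (1/3)"
  proof -
    have "A *v x t + b = B *v x t + c" if "t \<in> {1/3, 2/3}" for t
      using assms(2) on_segment that by auto
    from this[of "1/3"] this[of "2/3"]
    have "(A *v x (2/3) + b) - (A *v x (1/3) + b) = (B *v x (2/3) + c) - (B *v x (1/3) + c)"
      by simp
    then show ?thesis by simp
  qed
  moreover have "M *v x (2/3) - M *v x (1/3) = (1/3) *\<^sub>R (M *v (q - p))" for M :: "real^'n^'m"
    by (simp add: x_def matrix_vector_right_distrib matrix_vector_mult_scaleR
        scaleR_diff_left[symmetric])
  ultimately have "(1/3) *\<^sub>R ((A - B) *v (q - p)) = 0"
    by (simp add: matrix_vector_mult_diff_rdistrib scaleR_diff_right)
  then show ?thesis by simp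
qed

lemma normal_component_sigma:
  assumes "norm n = 1"
  shows "n \<bullet> (sigma mu A q *v n) = 2 * mu * (n \<bullet> (A *v n)) - q"
proof -
  have "n \<bullet> (transpose A *v n) = n \<bullet> (A *v n)"
    by (metis inner_commute dot_lmul_matrix transpose_matrix_vector)
  moreover have "n \<bullet> n = 1" using assms by (simp add: norm_eq_1)
  ultimately show ?thesis
    by (simp add: sigma_def epsm_def matrix_vector_mult_diff_rdistrib matrix_vector_mult_add_rdistrib
        scaleR_matrix_vector_assoc[symmetric] inner_diff_right inner_add_right algebra_simps)
qed

lemma IFE_normal_strain_and_pressure_jump:
  assumes "IFE mup mum p q n Ap bp qp Am bm qm"
    and "norm n = 1" and "n \<bullet> (q - p) = 0" and "p \<noteq> q"
  shows "n \<bullet> (Ap *v n) = n \<bullet> (Am *v n)"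
    and "qp - qm = 2 * (mup - mum) * (n \<bullet> (Am *v n))"
proof -
  have "(Ap - Am) *v (q - p) = 0"
    using assms(1,4) unfolding IFE_def by (blast intro: matrix_diff_annihilates_segment_direction)
  then have "n \<bullet> ((Ap - Am) *v n) = divm (Ap - Am)"
    using assms(2-4) by (intro normal_component_eq_divm) auto
  also have "\<dots> = 0"
    using assms(1) by (simp add: IFE_def divm_def sum_subtractf)
  finally show strain: "n \<bullet> (Ap *v n) = n \<bullet> (Am *v n)"
    by (simp add: matrix_vector_mult_diff_rdistrib inner_diff_right)
  have "n \<bullet> (sigma mup Ap qp *v n) = n \<bullet> (sigma mum Am qm *v n)"
    using assms(1) by (simp add: IFE_def)
  then show "qp - qm = 2 * (mup - mum) * (n \<bullet> (Am *v n))"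
    unfolding normal_component_sigma[OF assms(2)] strain by (simp add: algebra_simps)
qed

lemma normal_component_sq_le_frob2:
  fixes A :: mat2
  assumes "norm n = 1"
  shows "(n \<bullet> (A *v n))^2 \<le> frob2 A"
proof -
  have "\<bar>n \<bullet> (A *v n)\<bar> \<le> norm (A *v n)"
    using Cauchy_Schwarz_ineq2[of n "A *v n"] assms by simp
  then have "(n \<bullet> (A *v n))^2 \<le> (norm (A *v n))^2"
    by (metis abs_le_square_iff abs_norm_cancel)
  also have "\<dots> = (\<Sum>i\<in>UNIV. (A$i \<bullet> n)^2)"
    unfolding power2_norm_eq_inner by (simp add: inner_vec_def matrix_vector_mul_component power2_eq_square)
  also have "\<dots> \<le> (\<Sum>i\<in>UNIV. (norm (A$i))^2)"
  proof (rule sum_mono)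
    fix i
    have "\<bar>A$i \<bullet> n\<bar> \<le> norm (A$i)"
      using Cauchy_Schwarz_ineq2[of "A$i" n] assms by simp
    then show "(A$i \<bullet> n)^2 \<le> (norm (A$i))^2"
      by (metis abs_le_square_iff abs_norm_cancel)
  qed
  also have "\<dots> = frob2 A"
    unfolding power2_norm_eq_inner by (simp add: frob2_def inner_vec_def power2_eq_square)
  finally show ?thesis .
qed

lemma IFE_pressure_jump_sq_le:
  assumes "IFE mup mum p q n Ap bp qp Am bm qm"
    and "norm n = 1" and "n \<bullet> (q - p) = 0" and "p \<noteq> q"
  shows "(qp - qm)^2 \<le> 4 * (mup - mum)^2 * min (frob2 Ap) (frob2 Am)"
proof -
  note strain = IFE_normal_strain_and_pressure_jump[OF assms]
  have "(qp - qm)^2 = 4 * (mup - mum)^2 * (n \<bullet> (Am *v n))^2"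
    unfolding strain(2) by (simp add: power2_eq_square algebra_simps)
  moreover have "(n \<bullet> (Am *v n))^2 \<le> min (frob2 Ap) (frob2 Am)"
    using normal_component_sq_le_frob2[OF assms(2), of Ap] normal_component_sq_le_frob2[OF assms(2), of Am]
    unfolding strain(1) by simp
  ultimately show ?thesis
    by (simp add: mult_left_mono)
qed

lemma bounded_tri: "bounded (tri a b c)"
  unfolding tri_def
  by (meson bounded_subset compact_convex_hull compact_imp_bounded finite_imp_compact
      finite.insertI finite.emptyI interior_subset)

lemma lmeasurable_tri: "tri a b c \<in> lmeasurable"
  by (rule lmeasurable_open[OF bounded_tri]) (simp add: tri_def)

lemma dist_le_diameter_frontier:
  assumes "bounded S" and "x \<in> frontier S" and "y \<in> frontier S"
  shows "dist x y \<le> diameter S"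
  using assms diameter_bounded_bound[OF bounded_closure, of S x y] diameter_closure[of S]
  by (simp add: frontier_def)

lemma H1semi2_ge_min_measure:
  assumes "T \<in> lmeasurable"
  shows "min (frob2 Ap) (frob2 Am) * measure lebesgue T \<le> H1semi2 T p n Ap Am"
proof -
  define f where "f = (\<lambda>x::pt. if n \<bullet> (x - p) > 0 then frob2 Ap else frob2 Am)"
  define Tpos where "Tpos = T \<inter> {x. n \<bullet> x > n \<bullet> p}"
  define Tneg where "Tneg = T \<inter> {x. n \<bullet> x \<le> n \<bullet> p}"
  have "Tpos \<in> lmeasurable" "Tneg \<in> lmeasurable"
    unfolding Tpos_def Tneg_def using assms
    by (auto intro!: fmeasurable_Int_fmeasurable borel_open borel_closed
        simp: open_halfspace_gt closed_halfspace_le)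
  then have "f integrable_on Tpos" "f integrable_on Tneg"
    by (auto intro: integrable_eq[OF integrable_on_const]
        simp: f_def Tpos_def Tneg_def inner_diff_right)
  then have "f integrable_on T"
  proof (rule integrable_Un')
    have "Tpos \<inter> Tneg = {}" by (auto simp: Tpos_def Tneg_def)
    then show "negligible (Tpos \<inter> Tneg)" by simp
  qed (auto simp: Tpos_def Tneg_def)
  then have "integral T (\<lambda>x. min (frob2 Ap) (frob2 Am)) \<le> integral T f"
    using assms by (intro integral_le integrable_on_const) (auto simp: f_def)
  moreover have "integral T (\<lambda>x. min (frob2 Ap) (frob2 Am)) = min (frob2 Ap) (frob2 Am) * measure lebesgue T"
    using assms by (simp add: lmeasure_integral flip: integral_mult_right)
  ultimately show ?thesis
    by (simp add: H1semi2_def f_def)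
qed

lemma measure_unit_ball_mult_inradius_sq_le:
  fixes T :: "pt set"
  assumes "T \<in> lmeasurable" and "inradius T \<ge> 0"
  shows "measure lborel (ball (0::pt) 1) * (inradius T)^2 \<le> measure lebesgue T"
proof -
  define c where "c = measure lborel (ball (0::pt) 1)"
  define M where "M = measure lebesgue T"
  have "c > 0" unfolding c_def by (simp add: content_ball_pos)
  have "s \<le> sqrt (M / c)" if "ball x s \<subseteq> T" for x s
  proof (cases "s \<le> 0")
    case False
    have "s^2 * c = measure lebesgue (ball x s)"
      using content_ball_conv_unit_ball[of s x] False by (simp add: c_def)
    also have "\<dots> \<le> M"
      unfolding M_def using that assms(1) by (intro measure_mono_fmeasurable) auto
    finally show ?thesis
      using \<open>c > 0\<close> by (intro real_le_rsqrt) (simp add: field_simps)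
  qed (use \<open>c > 0\<close> in \<open>simp add: M_def order_trans[OF _ real_sqrt_ge_zero]\<close>)
  then have "inradius T \<le> sqrt (M / c)"
    unfolding inradius_def by (intro cSup_least) (auto intro: exI[of _ 0])
  then have "(inradius T)^2 \<le> M / c"
    using assms(2) \<open>c > 0\<close> by (metis M_def measure_nonneg divide_nonneg_pos power_mono real_sqrt_pow2)
  then show ?thesis
    using \<open>c > 0\<close> by (simp add: c_def M_def field_simps)
qed

lemma shape_regular_diameter_sq_le:
  fixes T :: "pt set"
  assumes "T \<in> lmeasurable" and "bounded T" and "\<rho> > 0"
    and "diameter T \<le> \<rho> * inradius T"
  shows "(diameter T)^2 \<le> \<rho>^2 / measure lborel (ball (0::pt) 1) * measure lebesgue T"
proof -
  define c where "c = measure lborel (ball (0::pt) 1)"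
  have "c > 0" unfolding c_def by (simp add: content_ball_pos)
  have "inradius T \<ge> 0"
    using assms(2-4) diameter_ge_0[of T] by (metis order_trans zero_le_mult_iff not_less)
  have "(diameter T)^2 \<le> \<rho>^2 * (inradius T)^2"
    using assms(4) diameter_ge_0[OF assms(2)] by (metis power_mono power_mult_distrib)
  also have "\<dots> = \<rho>^2 / c * (c * (inradius T)^2)"
    using \<open>c > 0\<close> by simp
  also have "\<dots> \<le> \<rho>^2 / c * measure lebesgue T"
    using measure_unit_ball_mult_inradius_sq_le[OF assms(1) \<open>inradius T \<ge> 0\<close>] \<open>c > 0\<close>
    unfolding c_def by (intro mult_left_mono) auto
  finally show ?thesis unfolding c_def .
qed

lemma H1semi2_nonneg:
  assumes "T \<in> lmeasurable"
  shows "H1semi2 T p n Ap Am \<ge> 0"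
proof -
  have "min (frob2 Ap) (frob2 Am) * measure lebesgue T \<ge> 0"
    by (simp add: frob2_def sum_nonneg)
  then show ?thesis
    using H1semi2_ge_min_measure[OF assms] by (rule order_trans)
qed

lemma diameter_mult_jumpL2sq_le:
  fixes T :: "pt set"
  assumes "T \<in> lmeasurable" and "bounded T" and "\<rho> > 0" and "diameter T \<le> \<rho> * inradius T"
    and "p \<in> frontier T" and "q \<in> frontier T" and "p \<noteq> q"
    and "norm n = 1" and "n \<bullet> (q - p) = 0" and "IFE mup mum p q n Ap bp qp Am bm qm"
  shows "diameter T * jumpL2sq p q qp qm
    \<le> 4 * (mup - mum)^2 * \<rho>^2 / measure lborel (ball (0::pt) 1) * H1semi2 T p n Ap Am"
proof -
  define m where "m = min (frob2 Ap) (frob2 Am)"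
  have "m \<ge> 0" unfolding m_def by (simp add: frob2_def sum_nonneg)
  have jump: "(qp - qm)^2 \<le> 4 * (mup - mum)^2 * m"
    using assms(7-10) IFE_pressure_jump_sq_le unfolding m_def by blast
  have "diameter T * jumpL2sq p q qp qm = (qp - qm)^2 * diameter T * dist p q"
    by (simp add: jumpL2sq_def)
  also have "\<dots> \<le> (qp - qm)^2 * diameter T * diameter T"
    using dist_le_diameter_frontier[OF assms(2,5,6)] diameter_ge_0[OF assms(2)]
    by (intro mult_left_mono) auto
  also have "\<dots> = (qp - qm)^2 * (diameter T)^2"
    by (simp add: power2_eq_square)
  also have "\<dots> \<le> 4 * (mup - mum)^2 * \<rho>^2 / measure lborel (ball (0::pt) 1) * (m * measure lebesgue T)"
    using mult_mono[OF jump shape_regular_diameter_sq_le[OF assms(1-4)]] \<open>m \<ge> 0\<close>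
    by (simp add: mult_ac)
  also have "\<dots> \<le> 4 * (mup - mum)^2 * \<rho>^2 / measure lborel (ball (0::pt) 1) * H1semi2 T p n Ap Am"
    unfolding m_def using H1semi2_ge_min_measure[OF assms(1)] by (intro mult_left_mono) auto
  finally show ?thesis .
qed

theorem lemma5p6:
  fixes \<rho> mup mum :: real
  assumes "\<rho> > 0" and "mup > 0" and "mum > 0"
  shows "\<exists>C > 0. \<forall>a b c p q n Ap bp qp Am bm qm.
     \<not> affine_dependent {a, b, c} \<and>
     diameter (tri a b c) \<le> \<rho> * inradius (tri a b c) \<and>
     p \<in> frontier (tri a b c) \<and> q \<in> frontier (tri a b c) \<and> p \<noteq> q \<and>
     norm n = 1 \<and> n \<bullet> (q - p) = 0 \<and>
     Tplus (tri a b c) p n \<noteq> {} \<and> Tminus (tri a b c) p n \<noteq> {} \<and>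
     IFE mup mum p q n Ap bp qp Am bm qm
     \<longrightarrow> diameter (tri a b c) * jumpL2sq p q qp qm
         \<le> C * H1semi2 (tri a b c) p n Ap Am"
proof -
  define K where "K = 4 * (mup - mum)^2 * \<rho>^2 / measure lborel (ball (0::pt) 1)"
  have "K \<ge> 0" unfolding K_def by simp
  have "diameter (tri a b c) * jumpL2sq p q qp qm \<le> (K + 1) * H1semi2 (tri a b c) p n Ap Am"
    if "diameter (tri a b c) \<le> \<rho> * inradius (tri a b c)"
      and "p \<in> frontier (tri a b c)" and "q \<in> frontier (tri a b c)" and "p \<noteq> q"
      and "norm n = 1" and "n \<bullet> (q - p) = 0" and "IFE mup mum p q n Ap bp qp Am bm qm"
    for a b c p q n Ap bp qp Am bm qm
  proof -
    have "diameter (tri a b c) * jumpL2sq p q qp qm \<le> K * H1semi2 (tri a b c) p n Ap Am"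
      unfolding K_def using lmeasurable_tri bounded_tri assms(1) that
      by (rule diameter_mult_jumpL2sq_le)
    also have "\<dots> \<le> (K + 1) * H1semi2 (tri a b c) p n Ap Am"
      using H1semi2_nonneg[OF lmeasurable_tri] by (simp add: distrib_right)
    finally show ?thesis .
  qed
  then show ?thesis
    using \<open>K \<ge> 0\<close> by (intro exI[of _ "K + 1"] conjI allI impI) (simp, blast)
qed

end
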